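(* Let $S$ be the tree with five vertices consisting of a root vertex of valence $1$, above it a vertex of valence $3$, and above each of the three incoming edges of the latter a vertex of valence $1$ (each carrying one leaf). Let $R$ be the tree with five vertices consisting of a root vertex of valence $2$, and above each of its two incoming edges a linear chain of two vertices of valence $1$ (each chain ending in one leaf). Then for every $n\in\mathbb N$, $$sh(S,L_n)=sh(R,L_n)=\sum_{k=0}^n\binom{k+2}{2}^2,$$ although $S$ and $R$ are not isomorphic.
   Context: A tree is a finite connected graph without cycles whose external edges are open. One external edge is the root; the others are leaves. Each vertex has one outgoing edge (towards the root) and a strictly positive number (valence) of incoming edges. No planar structure. $L_n$ is the linear tree with $n$ vertices, all of valence $1$. Shuffle: for trees $S,T$ with root edges $r_S,r_T$, a shuffle is a tree $A$ with edges labelled by pairs $(s,t)\in E(S)\times E(T)$ such that: (1) the root of $A$ is labelled $(r_S,r_T)$; (2) the labelling restricts to a bijection from leaves of $A$ onto $\mathrm{Leaves}(S)\times\mathrm{Leaves}(T)$; (3) if an edge labelled $(s,t)$ is not a leaf, the incoming edges of the vertex of $A$ above it are labelled either exactly $(s_1,t),\dots,(s_m,t)$ for $s_1,\dots,s_m$ the edges immediately above $s$ in $S$, or exactly $(s,t_1),\dots,(s,t_n)$ for $t_1,\dots,t_n$ the edges immediately above $t$ in $T$. Shuffles are taken up to isomorphism of labelled trees; $sh(S,T)$ is their number. *)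

theory Defs
  imports Main
begin

text \<open>A rooted tree is represented by its set of edges, its root edge, and a
  parent function: for a non-root edge e, par e is the outgoing edge of the
  vertex into which e is incoming. Every vertex is identified with its outgoing
  edge; the incoming edges of the vertex above e are the children of e. No planar structure.\<close>

type_synonym 'e rtree = "'e set \<times> 'e \<times> ('e \<Rightarrow> 'e)"

definition edges :: "'e rtree \<Rightarrow> 'e set" where "edges T = fst T"
definition root :: "'e rtree \<Rightarrow> 'e" where "root T = fst (snd T)"
definition par :: "'e rtree \<Rightarrow> 'e \<Rightarrow> 'e" where "par T = snd (snd T)"

definition children :: "'e rtree \<Rightarrow> 'e \<Rightarrow> 'e set" where
  "children T e = {c \<in> edges T. c \<noteq> root T \<and> par T c = e}"

definition leaves :: "'e rtree \<Rightarrow> 'e set" where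
  "leaves T = {e \<in> edges T. children T e = {}}"

definition is_tree :: "'e rtree \<Rightarrow> bool" where
  "is_tree T \<longleftrightarrow> finite (edges T) \<and> root T \<in> edges T
     \<and> (\<forall>e \<in> edges T - {root T}. par T e \<in> edges T)
     \<and> (\<forall>e \<in> edges T. \<exists>k. (par T ^^ k) e = root T)"

definition tree_iso :: "'a rtree \<Rightarrow> 'b rtree \<Rightarrow> bool" where
  "tree_iso A B \<longleftrightarrow> (\<exists>f. bij_betw f (edges A) (edges B) \<and> f (root A) = root B
     \<and> (\<forall>e \<in> edges A - {root A}. f (par A e) = par B (f e)))"

text \<open>Shuffles of S and T: trees A (edges taken in nat, which loses nothing up to
  isomorphism) with a labelling of edges by pairs of edges of S and T.\<close>
definition is_shuffle :: "'a rtree \<Rightarrow> 'b rtree \<Rightarrow> nat rtree \<Rightarrow> (nat \<Rightarrow> 'a \<times> 'b) \<Rightarrow> bool" where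
  "is_shuffle S T A lab \<longleftrightarrow> is_tree A
     \<and> (\<forall>e \<in> edges A. lab e \<in> edges S \<times> edges T)
     \<and> lab (root A) = (root S, root T)
     \<and> bij_betw lab (leaves A) (leaves S \<times> leaves T)
     \<and> (\<forall>e \<in> edges A - leaves A.
          bij_betw lab (children A e) (children S (fst (lab e)) \<times> {snd (lab e)})
        \<or> bij_betw lab (children A e) ({fst (lab e)} \<times> children T (snd (lab e))))"

definition shuffles :: "'a rtree \<Rightarrow> 'b rtree \<Rightarrow> (nat rtree \<times> (nat \<Rightarrow> 'a \<times> 'b)) set" where
  "shuffles S T = {(A, lab). is_shuffle S T A lab}"

definition lab_iso :: "nat rtree \<times> (nat \<Rightarrow> 'c) \<Rightarrow> nat rtree \<times> (nat \<Rightarrow> 'c) \<Rightarrow> bool" where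
  "lab_iso X Y \<longleftrightarrow> (\<exists>f. bij_betw f (edges (fst X)) (edges (fst Y))
     \<and> f (root (fst X)) = root (fst Y)
     \<and> (\<forall>e \<in> edges (fst X) - {root (fst X)}. f (par (fst X) e) = par (fst Y) (f e))
     \<and> (\<forall>e \<in> edges (fst X). snd Y (f e) = snd X e))"

definition sh :: "'a rtree \<Rightarrow> 'b rtree \<Rightarrow> nat" where
  "sh S T = card (shuffles S T // {(X, Y). X \<in> shuffles S T \<and> Y \<in> shuffles S T \<and> lab_iso X Y})"

text \<open>Linear tree with n vertices of valence 1: edges 0..n, root 0.\<close>
definition L :: "nat \<Rightarrow> nat rtree" where
  "L n = ({0..n}, 0, \<lambda>e. e - 1)"

text \<open>S: root edge 0; vertex above 0 has incoming edge 1; vertex above 1 has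
  incoming 2,3,4; vertices above 2,3,4 have leaves 5,6,7.\<close>
definition S_tree :: "nat rtree" where
  "S_tree = ({0..7}, 0, \<lambda>e. if e = 1 then 0 else if e \<in> {2,3,4} then 1
        else if e = 5 then 2 else if e = 6 then 3 else if e = 7 then 4 else 0)"

text \<open>R: root edge 0; vertex above 0 has incoming 1,2; chains 1-3-5 and 2-4-6.\<close>
definition R_tree :: "nat rtree" where
  "R_tree = ({0..6}, 0, \<lambda>e. if e \<in> {1,2} then 0 else if e = 3 then 1
        else if e = 4 then 2 else if e = 5 then 3 else if e = 6 then 4 else 0)"

end

theory Submission
  imports Defs "HOL-Library.Nat_Bijection"
begin

text \<open>Label each edge of a shuffle A of S with L n by its pair (s, t). This labelling is
  injective, so up to isomorphism A is determined by its set of labels. For every inner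
  edge s of S there is a time \<tau> s at which A branches into the children of s, the times
  increase towards the leaves, and the labels of A are exactly the pairs (s, t) with
  \<tau> (par s) \<le> t \<le> \<tau> s (reading 0 below the root and n above the leaves). Conversely
  every such monotone \<tau> is realised by a shuffle, so sh S (L n) counts the monotone maps
  from the inner edges of S to {0..n}. For S these are \<tau>0 \<le> \<tau>1 \<le> \<tau>2, \<tau>3, \<tau>4, giving
  \<Sum>a \<Sum>b\<ge>a (n + 1 - b)^3; for R they are \<tau>0 \<le> \<tau>1 \<le> \<tau>3 and \<tau>0 \<le> \<tau>2 \<le> \<tau>4, giving
  \<Sum>a (\<Sum>b\<ge>a (n + 1 - b))^2. Nicomachus' identity (\<Sum> j^3 = (\<Sum> j)^2) makes both equal to
  \<Sum>k ((k + 2) choose 2)^2, while S and R differ in their number of edges.\<close>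

lemma sum_atLeastAtMost_diff_reindex:
  "a \<le> (n::nat) \<Longrightarrow> (\<Sum>b=a..n. f (n - b)) = (\<Sum>j=0..n - a. (f j :: 'a::comm_monoid_add))"
  by (rule sum.reindex_bij_witness[where i="\<lambda>j. n - j" and j="\<lambda>b. n - b"]) auto

lemma sum_Suc_eq_choose_two: "(\<Sum>j=0..m. Suc j) = (m + 2) choose 2"
  by (induction m) (simp_all add: numeral_2_eq_2)

lemma sum_Suc_cubes: "(\<Sum>j=0..m. Suc j ^ 3) = ((m + 2) choose 2)\<^sup>2"
proof (induction m)
  case 0
  then show ?case by (simp add: numeral_2_eq_2)
next
  case (Suc m)
  define c where "c = (m + 2) choose 2"
  have c2: "2 * c = Suc (Suc m) * Suc m"
    unfolding c_def choose_two by simp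
  have "(\<Sum>j=0..Suc m. Suc j ^ 3) = c\<^sup>2 + Suc (Suc m) ^ 3"
    using Suc by (simp add: c_def)
  also have "\<dots> = c\<^sup>2 + (2 * c) * Suc (Suc m) + (Suc (Suc m))\<^sup>2"
    unfolding c2 by (simp add: power2_eq_square power3_eq_cube algebra_simps)
  also have "\<dots> = (c + Suc (Suc m))\<^sup>2"
    by (simp add: power2_eq_square algebra_simps)
  also have "c + Suc (Suc m) = (Suc m + 2) choose 2"
    unfolding c_def by (simp add: numeral_2_eq_2)
  finally show ?case .
qed

lemma sum_triangle_Suc_cubes:
  "(\<Sum>a=0..n. \<Sum>b=a..n. (Suc n - b) ^ 3) = (\<Sum>k=0..n. ((k + 2) choose 2)\<^sup>2)"
proof -
  have "(\<Sum>b=a..n. (Suc n - b) ^ 3) = ((n - a + 2) choose 2)\<^sup>2" if "a \<le> n" for a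
  proof -
    have "(\<Sum>b=a..n. (Suc n - b) ^ 3) = (\<Sum>b=a..n. Suc (n - b) ^ 3)"
      by (rule sum.cong) (auto simp: Suc_diff_le)
    then show ?thesis
      using sum_atLeastAtMost_diff_reindex[OF that, of "\<lambda>j. Suc j ^ 3"] sum_Suc_cubes by simp
  qed
  then have "(\<Sum>a=0..n. \<Sum>b=a..n. (Suc n - b) ^ 3) = (\<Sum>a=0..n. ((n - a + 2) choose 2)\<^sup>2)"
    by (intro sum.cong) auto
  also have "\<dots> = (\<Sum>k=0..n. ((k + 2) choose 2)\<^sup>2)"
    using sum_atLeastAtMost_diff_reindex[of 0 n "\<lambda>k. ((k + 2) choose 2)\<^sup>2"] by simp
  finally show ?thesis .
qed

lemma sum_triangle_Suc_squares:
  "(\<Sum>a=0..n. (\<Sum>b=a..n. Suc n - b)\<^sup>2) = (\<Sum>k=0..n. ((k + 2) choose 2)\<^sup>2)"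
proof -
  have "(\<Sum>b=a..n. Suc n - b) = (n - a + 2) choose 2" if "a \<le> n" for a
  proof -
    have "(\<Sum>b=a..n. Suc n - b) = (\<Sum>b=a..n. Suc (n - b))"
      by (rule sum.cong) (auto simp: Suc_diff_le)
    then show ?thesis
      using sum_atLeastAtMost_diff_reindex[OF that, of Suc] sum_Suc_eq_choose_two by simp
  qed
  then have "(\<Sum>a=0..n. (\<Sum>b=a..n. Suc n - b)\<^sup>2) = (\<Sum>a=0..n. ((n - a + 2) choose 2)\<^sup>2)"
    by (intro sum.cong) auto
  also have "\<dots> = (\<Sum>k=0..n. ((k + 2) choose 2)\<^sup>2)"
    using sum_atLeastAtMost_diff_reindex[of 0 n "\<lambda>k. ((k + 2) choose 2)\<^sup>2"] by simp
  finally show ?thesis .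
qed

lemma bij_betw_prod_decode: "bij_betw prod_decode (prod_encode ` C) C"
  by (rule bij_betw_imageI) (simp_all add: image_image inj_on_def)

lemma card_quotient_eq_card_image:
  assumes "\<And>X Y. X \<in> A \<Longrightarrow> Y \<in> A \<Longrightarrow> R X Y \<longleftrightarrow> f X = f Y"
  shows "card (A // {(X, Y). X \<in> A \<and> Y \<in> A \<and> R X Y}) = card (f ` A)"
proof -
  let ?fibre = "\<lambda>v. {X \<in> A. f X = v}"
  have "A // {(X, Y). X \<in> A \<and> Y \<in> A \<and> R X Y} = (\<lambda>X. {Y \<in> A. R X Y}) ` A"
    by (auto simp: quotient_def)
  also have "\<dots> = ?fibre ` f ` A"
    unfolding image_image using assms by (intro image_cong) auto
  finally have "A // {(X, Y). X \<in> A \<and> Y \<in> A \<and> R X Y} = ?fibre ` f ` A" .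
  moreover have "inj_on ?fibre (f ` A)"
    by (rule inj_onI) blast
  ultimately show ?thesis
    by (simp add: card_image)
qed

definition anc :: "'e rtree \<Rightarrow> 'e \<Rightarrow> 'e \<Rightarrow> bool" where
  "anc T x y \<longleftrightarrow> (\<exists>k. (par T ^^ k) y = x)"

lemma anc_refl: "anc T x x"
  unfolding anc_def by (rule exI[of _ 0]) simp

lemma anc_trans: "anc T x y \<Longrightarrow> anc T y z \<Longrightarrow> anc T x z"
  unfolding anc_def by (metis funpow_add o_apply)

lemma anc_par: "anc T (par T y) y"
  unfolding anc_def by (rule exI[of _ 1]) simp

lemma anc_par_right: "anc T x y \<Longrightarrow> x \<noteq> y \<Longrightarrow> anc T x (par T y)"
  unfolding anc_def by (metis funpow_0 funpow_Suc_right o_apply not0_implies_Suc)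

lemma childrenD: "c \<in> children T s \<Longrightarrow> c \<in> edges T \<and> c \<noteq> root T \<and> par T c = s"
  by (auto simp: children_def)

lemma children_L: "children (L n) t = (if t < n then {Suc t} else {})"
  by (auto simp: children_def L_def edges_def root_def par_def)

lemma edges_L: "edges (L n) = {0..n}"
  and root_L: "root (L n) = 0"
  by (simp_all add: L_def edges_def root_def)

lemma leaves_L: "leaves (L n) = {n}"
  unfolding leaves_def children_L edges_L by auto

text \<open>The parent of the root, left unspecified by is_tree, is required to be the root itself.\<close>
locale depth_tree =
  fixes S :: "nat rtree" and d :: "nat \<Rightarrow> nat"
  assumes finite_edges: "finite (edges S)"
    and root_in_edges: "root S \<in> edges S"
    and par_in_edges: "\<And>s. s \<in> edges S \<Longrightarrow> par S s \<in> edges S"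
    and par_root: "par S (root S) = root S"
    and depth_root: "d (root S) = 0"
    and depth_par: "\<And>s. s \<in> edges S \<Longrightarrow> s \<noteq> root S \<Longrightarrow> d (par S s) + 1 = d s"
    and leaf_above: "\<And>s. s \<in> edges S \<Longrightarrow> s \<notin> leaves S \<Longrightarrow> \<exists>l\<in>leaves S. anc S s l"
begin

lemma depth_eq_0D: "s \<in> edges S \<Longrightarrow> d s = 0 \<Longrightarrow> s = root S"
  using depth_par by fastforce

lemma funpow_par_in_edges: "s \<in> edges S \<Longrightarrow> (par S ^^ k) s \<in> edges S"
  by (induction k) (auto intro: par_in_edges)

lemma funpow_par_root: "(par S ^^ k) (root S) = root S"
  by (induction k) (auto simp: par_root)

lemma depth_funpow_par: "s \<in> edges S \<Longrightarrow> d ((par S ^^ k) s) = d s - k"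
proof (induction k)
  case (Suc k)
  have "d (par S z) = d z - 1" if "z \<in> edges S" for z
    using depth_par[OF that] by (cases "z = root S") (auto simp: par_root depth_root)
  then show ?case
    using Suc funpow_par_in_edges by simp
qed simp

lemma anc_depth_le: "anc S x y \<Longrightarrow> y \<in> edges S \<Longrightarrow> d x \<le> d y \<and> x \<in> edges S"
  unfolding anc_def using depth_funpow_par funpow_par_in_edges by auto

lemma anc_depth_eq:
  assumes "anc S x y" "y \<in> edges S" "d x = d y"
  shows "x = y"
proof -
  obtain k where k: "(par S ^^ k) y = x"
    using assms(1) by (auto simp: anc_def)
  have "d y - k = d y"
    using depth_funpow_par[OF assms(2), of k] k assms(3) by simp
  then have "k = 0 \<or> d y = 0"
    by linarith
  then have "k = 0 \<or> y = root S"
    using depth_eq_0D[OF assms(2)] by blast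
  then show ?thesis
    using k funpow_par_root by auto
qed

lemma anc_antisym: "anc S x y \<Longrightarrow> anc S y x \<Longrightarrow> y \<in> edges S \<Longrightarrow> x = y"
  using anc_depth_le anc_depth_eq by (meson le_antisym)

lemma not_anc_par: "s \<in> edges S \<Longrightarrow> s \<noteq> root S \<Longrightarrow> \<not> anc S s (par S s)"
  using anc_depth_le[of s "par S s"] depth_par[of s] par_in_edges[of s] by auto

lemma par_neq: "s \<in> edges S \<Longrightarrow> s \<noteq> root S \<Longrightarrow> par S s \<noteq> s"
  using not_anc_par anc_refl by metis

lemma anc_par_funpow_less:
  assumes "c \<in> edges S" "c \<noteq> root S" "(par S ^^ k) y = c" "(par S ^^ k') y = c'" "k' < k"
  shows "par S c' \<noteq> par S c"
proof
  assume eq: "par S c' = par S c"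
  have "(par S ^^ k) y = (par S ^^ (k - k' - 1)) (par S ((par S ^^ k') y))"
    using \<open>k' < k\<close> by (metis Suc_diff_Suc diff_Suc_1 funpow_Suc_right funpow_add o_apply
      add.commute le_add_diff_inverse less_imp_le_nat)
  then have "(par S ^^ (k - k' - 1)) (par S c) = c"
    using assms eq by simp
  then show False
    using not_anc_par[OF assms(1,2)] by (auto simp: anc_def)
qed

lemma siblings_no_common_descendant:
  assumes "c \<in> edges S" "c \<noteq> root S" "c' \<in> edges S" "c' \<noteq> root S"
    and "par S c = par S c'" "c \<noteq> c'" "anc S c y" "anc S c' y"
  shows False
proof -
  obtain k k' where k: "(par S ^^ k) y = c" "(par S ^^ k') y = c'"
    using assms(7,8) by (auto simp: anc_def)
  then show False
    using anc_par_funpow_less[of c k y k' c'] anc_par_funpow_less[of c' k' y k c] assms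
    by (cases k k' rule: linorder_cases) auto
qed

definition inner_edges :: "nat set" where
  "inner_edges = edges S - leaves S"

lemma inner_edges_if_child: "c \<in> children S s \<Longrightarrow> s \<in> edges S \<Longrightarrow> s \<in> inner_edges"
  by (auto simp: inner_edges_def leaves_def)

lemma par_inner_edges: "s \<in> edges S \<Longrightarrow> s \<noteq> root S \<Longrightarrow> par S s \<in> inner_edges \<and> s \<in> children S (par S s)"
  using par_in_edges[of s] by (auto simp: inner_edges_def leaves_def children_def)

lemma child_strict_anc: "c \<in> children S s \<Longrightarrow> s \<noteq> c \<and> anc S s c"
  using childrenD[of c S s] par_neq[of c] anc_par[of S c] by auto

text \<open>A shuffle of S with L n will be encoded by a time \<tau> s \<in> {0..n} for every inner edge s:
  the position on L n at which the shuffle passes the S-vertex above s. The edges of the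
  shuffle are then the pairs (s, t) with t between the times of the vertices below and
  above s.\<close>
definition monotone_times :: "nat \<Rightarrow> (nat \<Rightarrow> nat) set" where
  "monotone_times n = {\<tau>. \<forall>s. (s \<in> inner_edges \<longrightarrow> \<tau> s \<le> n \<and> (s \<noteq> root S \<longrightarrow> \<tau> (par S s) \<le> \<tau> s))
     \<and> (s \<notin> inner_edges \<longrightarrow> \<tau> s = 0)}"

definition first_time :: "(nat \<Rightarrow> nat) \<Rightarrow> nat \<Rightarrow> nat" where
  "first_time \<tau> s = (if s = root S then 0 else \<tau> (par S s))"

definition last_time :: "nat \<Rightarrow> (nat \<Rightarrow> nat) \<Rightarrow> nat \<Rightarrow> nat" where
  "last_time n \<tau> s = (if s \<in> inner_edges then \<tau> s else n)"

definition label_set :: "nat \<Rightarrow> (nat \<Rightarrow> nat) \<Rightarrow> (nat \<times> nat) set" where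
  "label_set n \<tau> = {(s, t). s \<in> edges S \<and> first_time \<tau> s \<le> t \<and> t \<le> last_time n \<tau> s}"

lemma monotone_times_iff:
  "\<tau> \<in> monotone_times n \<longleftrightarrow> (\<forall>s\<in>inner_edges. \<tau> s \<le> n \<and> (s \<noteq> root S \<longrightarrow> \<tau> (par S s) \<le> \<tau> s))
     \<and> (\<forall>s. s \<notin> inner_edges \<longrightarrow> \<tau> s = 0)"
  by (auto simp: monotone_times_def)

lemma monotone_timesD:
  "\<tau> \<in> monotone_times n \<Longrightarrow> s \<in> inner_edges \<Longrightarrow> \<tau> s \<le> n \<and> (s \<noteq> root S \<longrightarrow> \<tau> (par S s) \<le> \<tau> s)"
  by (auto simp: monotone_times_def)

lemma first_le_last_time:
  assumes "\<tau> \<in> monotone_times n" "s \<in> edges S"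
  shows "first_time \<tau> s \<le> last_time n \<tau> s \<and> last_time n \<tau> s \<le> n"
proof (cases "s = root S")
  case False
  then have "par S s \<in> inner_edges"
    using par_inner_edges[OF assms(2)] by blast
  then show ?thesis
    using monotone_timesD[OF assms(1)] False by (auto simp: first_time_def last_time_def)
qed (use monotone_timesD[OF assms(1)] in \<open>auto simp: first_time_def last_time_def\<close>)

end

locale line_shuffle = depth_tree +
  fixes n :: nat and A :: "nat rtree" and lab :: "nat \<Rightarrow> nat \<times> nat"
  assumes shuffle: "is_shuffle S (L n) A lab"
begin

lemma tree_A: "is_tree A"
  using shuffle by (simp add: is_shuffle_def)

lemma lab_in: "e \<in> edges A \<Longrightarrow> lab e \<in> edges S \<times> {0..n}"
  using shuffle by (auto simp: is_shuffle_def edges_L)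

lemma lab_root: "lab (root A) = (root S, 0)"
  using shuffle by (simp add: is_shuffle_def root_L)

lemma lab_leaves: "bij_betw lab (leaves A) (leaves S \<times> {n})"
  using shuffle by (simp add: is_shuffle_def leaves_L)

lemma lab_children:
  "e \<in> edges A \<Longrightarrow> e \<notin> leaves A \<Longrightarrow>
     bij_betw lab (children A e) (children S (fst (lab e)) \<times> {snd (lab e)})
   \<or> bij_betw lab (children A e) ({fst (lab e)} \<times> children (L n) (snd (lab e)))"
  using shuffle by (auto simp: is_shuffle_def)

lemma root_A: "root A \<in> edges A"
  using tree_A by (simp add: is_tree_def)

lemma par_A: "e \<in> edges A \<Longrightarrow> e \<noteq> root A \<Longrightarrow> par A e \<in> edges A"
  using tree_A by (simp add: is_tree_def)

lemma children_A_subset: "children A e \<subseteq> edges A"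
  by (auto simp: children_def)

lemma nonleaf_has_child: "e \<in> edges A \<Longrightarrow> e \<notin> leaves A \<Longrightarrow> \<exists>x. x \<in> children A e"
  by (auto simp: leaves_def)

lemma lab_leaf: "e \<in> leaves A \<Longrightarrow> fst (lab e) \<in> leaves S \<and> snd (lab e) = n"
  using lab_leaves bij_betwE by fastforce

definition labels :: "(nat \<times> nat) set" where
  "labels = lab ` edges A"

definition height :: "nat \<Rightarrow> nat" where
  "height e = d (fst (lab e)) + snd (lab e)"

lemma labels_bounds: "(s, u) \<in> labels \<Longrightarrow> s \<in> edges S \<and> u \<le> n"
  using lab_in by (fastforce simp: labels_def)

lemma lab_par_step:
  assumes e: "e \<in> edges A" "e \<noteq> root A"
  shows "(fst (lab e) \<in> children S (fst (lab (par A e))) \<and> snd (lab e) = snd (lab (par A e)))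
     \<or> (fst (lab e) = fst (lab (par A e)) \<and> snd (lab e) = Suc (snd (lab (par A e))))"
proof -
  let ?p = "par A e"
  have c: "e \<in> children A ?p"
    using e by (auto simp: children_def)
  then have "?p \<notin> leaves A"
    by (auto simp: leaves_def)
  then have "lab e \<in> children S (fst (lab ?p)) \<times> {snd (lab ?p)}
     \<or> lab e \<in> {fst (lab ?p)} \<times> children (L n) (snd (lab ?p))"
    using lab_children[OF par_A[OF e]] c bij_betwE by blast
  then show ?thesis
    by (auto simp: mem_Times_iff children_L split: if_splits)
qed

lemma height_par: "e \<in> edges A \<Longrightarrow> e \<noteq> root A \<Longrightarrow> height (par A e) + 1 = height e"
  using lab_par_step[of e] childrenD[of "fst (lab e)" S] depth_par[of "fst (lab e)"]
  by (auto simp: height_def)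

lemma height_eq_0D: "e \<in> edges A \<Longrightarrow> height e = 0 \<Longrightarrow> e = root A"
  using height_par by fastforce

lemma funpow_par_A:
  assumes e: "e \<in> edges A" and j: "j \<le> height e"
  shows "(par A ^^ j) e \<in> edges A \<and> height ((par A ^^ j) e) + j = height e
     \<and> anc S (fst (lab ((par A ^^ j) e))) (fst (lab e)) \<and> snd (lab ((par A ^^ j) e)) \<le> snd (lab e)"
  using j
proof (induction j)
  case 0
  then show ?case using e by (simp add: anc_refl)
next
  case (Suc j)
  let ?x = "(par A ^^ j) e"
  have IH: "?x \<in> edges A" "height ?x + j = height e" "anc S (fst (lab ?x)) (fst (lab e))"
    "snd (lab ?x) \<le> snd (lab e)"
    using Suc by auto
  have x: "?x \<noteq> root A"
    using IH(2) Suc.prems lab_root depth_root by (auto simp: height_def)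
  have "anc S (fst (lab (par A ?x))) (fst (lab ?x))"
    using lab_par_step[OF IH(1) x] childrenD[of "fst (lab ?x)" S] anc_par[of S "fst (lab ?x)"]
      anc_refl[of S "fst (lab ?x)"] by auto
  then have "anc S (fst (lab (par A ?x))) (fst (lab e))"
    using IH(3) by (rule anc_trans)
  then show ?case
    using lab_par_step[OF IH(1) x] height_par[OF IH(1) x] IH par_A[OF IH(1) x] by auto
qed

lemma funpow_par_A_height: "e \<in> edges A \<Longrightarrow> (par A ^^ height e) e = root A"
  using funpow_par_A[of e "height e"] height_eq_0D by auto

text \<open>The bound on j matters: is_tree says nothing about the parent of the root of A.\<close>
definition anc_A :: "nat \<Rightarrow> nat \<Rightarrow> bool" where
  "anc_A x y \<longleftrightarrow> (\<exists>j \<le> height y. (par A ^^ j) y = x)"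

lemma anc_A_lab: "anc_A x y \<Longrightarrow> y \<in> edges A \<Longrightarrow> anc S (fst (lab x)) (fst (lab y)) \<and> snd (lab x) \<le> snd (lab y)"
  using funpow_par_A unfolding anc_A_def by blast

lemma branch_vertex_A:
  assumes e: "e1 \<in> edges A" "e2 \<in> edges A" and n1: "\<not> anc_A e1 e2" and n2: "\<not> anc_A e2 e1"
  obtains m a1 a2 where "m \<in> edges A" "a1 \<in> children A m" "a2 \<in> children A m" "a1 \<noteq> a2"
    "anc_A a1 e1" "anc_A a2 e2"
proof -
  define J where "J = {j. j \<le> height e1 \<and> (\<exists>i \<le> height e2. (par A ^^ j) e1 = (par A ^^ i) e2)}"
  define j where "j = (LEAST j. j \<in> J)"
  have "height e1 \<in> J"
    unfolding J_def using funpow_par_A_height e by auto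
  then have "j \<in> J"
    unfolding j_def by (rule LeastI)
  then obtain i where i: "i \<le> height e2" "(par A ^^ j) e1 = (par A ^^ i) e2" "j \<le> height e1"
    unfolding J_def by auto
  have j0: "j \<noteq> 0" and i0: "i \<noteq> 0"
    using n1 n2 i unfolding anc_A_def by (metis funpow_0)+
  define a1 where "a1 = (par A ^^ (j - 1)) e1"
  define a2 where "a2 = (par A ^^ (i - 1)) e2"
  define m where "m = (par A ^^ j) e1"
  have pa1: "par A a1 = m" and pa2: "par A a2 = m"
    unfolding a1_def a2_def m_def using j0 i0 i(2)
    by (metis Suc_pred' funpow.simps(2) neq0_conv o_apply)+
  have a1: "a1 \<in> edges A" "height a1 + (j - 1) = height e1"
    using funpow_par_A[OF e(1), of "j - 1"] i unfolding a1_def by auto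
  have a2: "a2 \<in> edges A" "height a2 + (i - 1) = height e2"
    using funpow_par_A[OF e(2), of "i - 1"] i unfolding a2_def by auto
  have "a1 \<noteq> root A" "a2 \<noteq> root A"
    using a1 a2 i j0 i0 lab_root depth_root by (auto simp: height_def)
  then have "a1 \<in> children A m" "a2 \<in> children A m"
    using a1 a2 pa1 pa2 unfolding children_def by auto
  moreover have "a1 \<noteq> a2"
  proof
    assume "a1 = a2"
    moreover have "i - 1 \<le> height e2" "j - 1 \<le> height e1"
      using i by auto
    ultimately have "j - 1 \<in> J"
      unfolding J_def a1_def a2_def by blast
    then show False
      using j0 Least_le[of "\<lambda>j. j \<in> J" "j - 1"] unfolding j_def by fastforce
  qed
  moreover have "m \<in> edges A"
    using funpow_par_A[OF e(1), of j] i unfolding m_def by auto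
  moreover have "anc_A a1 e1"
    unfolding anc_A_def a1_def using i by (intro exI[of _ "j - 1"]) auto
  moreover have "anc_A a2 e2"
    unfolding anc_A_def a2_def using i by (intro exI[of _ "i - 1"]) auto
  ultimately show thesis
    using that by blast
qed

text \<open>At a branch vertex of A either two distinct children of an S-edge start, which then
  have no common descendant in S, or the move is in L, which has only one child.\<close>
lemma incomparable_no_common_descendant:
  assumes e: "e1 \<in> edges A" "e2 \<in> edges A" and n1: "\<not> anc_A e1 e2" and n2: "\<not> anc_A e2 e1"
    and y: "anc S (fst (lab e1)) y" "anc S (fst (lab e2)) y"
  shows False
proof -
  obtain m a1 a2 where m: "m \<in> edges A" "a1 \<in> children A m" "a2 \<in> children A m" "a1 \<noteq> a2"
     "anc_A a1 e1" "anc_A a2 e2"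
    using branch_vertex_A[OF e n1 n2] by blast
  have "m \<notin> leaves A"
    using m(2) by (auto simp: leaves_def)
  from lab_children[OF m(1) this] show False
  proof
    assume b: "bij_betw lab (children A m) (children S (fst (lab m)) \<times> {snd (lab m)})"
    have "lab a1 \<noteq> lab a2"
      using b m(2-4) by (meson bij_betw_def inj_on_def)
    moreover have "lab a1 \<in> children S (fst (lab m)) \<times> {snd (lab m)}"
       "lab a2 \<in> children S (fst (lab m)) \<times> {snd (lab m)}"
      using b m(2,3) by (meson bij_betwE)+
    ultimately have "fst (lab a1) \<noteq> fst (lab a2)" "fst (lab a1) \<in> children S (fst (lab m))"
       "fst (lab a2) \<in> children S (fst (lab m))"
      by (auto simp: prod_eq_iff)
    moreover have "anc S (fst (lab a1)) y" "anc S (fst (lab a2)) y"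
      using anc_trans[OF conjunct1[OF anc_A_lab[OF m(5) e(1)]] y(1)]
        anc_trans[OF conjunct1[OF anc_A_lab[OF m(6) e(2)]] y(2)] .
    ultimately show False
      using siblings_no_common_descendant[of "fst (lab a1)" "fst (lab a2)" y]
        childrenD[of "fst (lab a1)" S] childrenD[of "fst (lab a2)" S] by auto
  next
    assume b: "bij_betw lab (children A m) ({fst (lab m)} \<times> children (L n) (snd (lab m)))"
    have "lab a1 \<in> {fst (lab m)} \<times> children (L n) (snd (lab m))"
       "lab a2 \<in> {fst (lab m)} \<times> children (L n) (snd (lab m))"
      using b m(2,3) by (meson bij_betwE)+
    then have "lab a1 = lab a2"
      by (auto simp: children_L split: if_splits)
    then show False
      using b m(2-4) by (meson bij_betw_def inj_on_def)
  qed
qed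

lemma anc_A_same_lab: "anc_A x y \<Longrightarrow> y \<in> edges A \<Longrightarrow> lab x = lab y \<Longrightarrow> x = y"
  using funpow_par_A unfolding anc_A_def height_def by fastforce

lemma inj_on_lab: "inj_on lab (edges A)"
proof (rule inj_onI, rule ccontr)
  fix e1 e2
  assume e: "e1 \<in> edges A" "e2 \<in> edges A" and l: "lab e1 = lab e2" and ne: "e1 \<noteq> e2"
  have "\<not> anc_A e1 e2" "\<not> anc_A e2 e1"
    using anc_A_same_lab e l ne by metis+
  then show False
    using incomparable_no_common_descendant[OF e _ _ anc_refl] l anc_refl by metis
qed

lemma root_in_labels: "(root S, 0) \<in> labels"
  using lab_root root_A by (force simp: labels_def)

lemma leaf_in_labels: "l \<in> leaves S \<Longrightarrow> (l, n) \<in> labels"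
  using lab_leaves by (force simp: labels_def leaves_def bij_betw_def)

lemma labels_mono:
  assumes "(x, a) \<in> labels" "(y, b) \<in> labels" "anc S x y" "x \<noteq> y"
  shows "a \<le> b"
proof -
  obtain e1 e2 where e: "e1 \<in> edges A" "e2 \<in> edges A" "lab e1 = (x, a)" "lab e2 = (y, b)"
    using assms(1,2) by (auto simp: labels_def)
  have "y \<in> edges S"
    using labels_bounds assms(2) by blast
  then have "\<not> anc_A e2 e1"
    using anc_A_lab[of e2 e1] e assms(3,4) anc_antisym by auto
  moreover have "\<not> anc_A e1 e2 \<Longrightarrow> \<not> anc_A e2 e1 \<Longrightarrow> False"
    using incomparable_no_common_descendant[OF e(1,2) _ _ _ anc_refl] e(3,4) assms(3) by simp
  ultimately show ?thesis
    using anc_A_lab[of e1 e2] e by fastforce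
qed

lemma labels_pred:
  assumes "(y, b) \<in> labels" "(y, b) \<noteq> (root S, 0)"
  shows "(y \<in> edges S \<and> y \<noteq> root S \<and> (par S y, b) \<in> labels) \<or> (0 < b \<and> (y, b - 1) \<in> labels)"
proof -
  obtain e where e: "e \<in> edges A" "lab e = (y, b)"
    using assms(1) by (auto simp: labels_def)
  have ne: "e \<noteq> root A"
    using e assms(2) lab_root by auto
  have "lab (par A e) \<in> labels"
    using par_A[OF e(1) ne] by (simp add: labels_def)
  then show ?thesis
    using lab_par_step[OF e(1) ne] e(2) childrenD[of y S]
    by (cases "lab (par A e)") auto
qed

lemma lab_par:
  assumes e: "e \<in> edges A" "e \<noteq> root A" "lab e = (s, t)"
  shows "lab (par A e) = (if 0 < t \<and> (s, t - 1) \<in> labels then (s, t - 1) else (par S s, t))"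
proof -
  have p: "lab (par A e) \<in> labels"
    using par_A[OF e(1,2)] by (simp add: labels_def)
  consider (S_move) "s \<in> edges S" "s \<noteq> root S" "lab (par A e) = (par S s, t)"
    | (L_move) "0 < t" "lab (par A e) = (s, t - 1)"
    using lab_par_step[OF e(1,2)] e(3) childrenD[of s S] by (cases "lab (par A e)") auto
  then show ?thesis
  proof cases
    case S_move
    have no_L_move: "\<not> (0 < t \<and> (s, t - 1) \<in> labels)"
    proof
      assume h: "0 < t \<and> (s, t - 1) \<in> labels"
      have "(par S s, t) \<in> labels"
        using p S_move by simp
      then have "t \<le> t - 1"
        using labels_mono[OF _ conjunct2[OF h] anc_par[of S s] par_neq[OF S_move(1,2)]] by blast
      then show False
        using h by linarith
    qed
    show ?thesis
      unfolding if_not_P[OF no_L_move] by (rule S_move(3))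
  next
    case L_move
    then show ?thesis
      using p by simp
  qed
qed

lemma branch_exists:
  assumes "(y, b) \<in> labels" "anc S x y" "x \<noteq> y"
  shows "\<exists>a. (x, a) \<in> labels \<and> (\<exists>c\<in>children S x. (c, a) \<in> labels)"
  using assms
proof (induction "d y + b" arbitrary: y b rule: less_induct)
  case less
  have "(y, b) \<noteq> (root S, 0)"
    using less.prems(2,3) funpow_par_root by (auto simp: anc_def)
  from labels_pred[OF less.prems(1) this] show ?case
  proof
    assume h: "y \<in> edges S \<and> y \<noteq> root S \<and> (par S y, b) \<in> labels"
    show ?case
    proof (cases "x = par S y")
      case True
      then have "y \<in> children S x"
        using h by (auto simp: children_def)
      then show ?thesis
        using h less.prems(1) True by blast
    next
      case False
      have "d (par S y) + b < d y + b"
        using depth_par[of y] h by simp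
      then show ?thesis
        using less.hyps[of "par S y" b] h anc_par_right[OF less.prems(2,3)] False by blast
    qed
  next
    assume h: "0 < b \<and> (y, b - 1) \<in> labels"
    then have "d y + (b - 1) < d y + b"
      by simp
    then show ?thesis
      using less.hyps[of y "b - 1"] h less.prems(2,3) by blast
  qed
qed

definition branch_time :: "nat \<Rightarrow> nat" where
  "branch_time s = (LEAST t. (s, t) \<in> labels \<and> (\<exists>c\<in>children S s. (c, t) \<in> labels))"

definition shuffle_times :: "nat \<Rightarrow> nat" where
  "shuffle_times s = (if s \<in> inner_edges then branch_time s else 0)"

lemma branch_time:
  assumes "s \<in> inner_edges"
  shows "(s, branch_time s) \<in> labels \<and> (\<exists>c\<in>children S s. (c, branch_time s) \<in> labels)"
proof -
  obtain l where l: "l \<in> leaves S" "anc S s l"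
    using leaf_above assms by (auto simp: inner_edges_def)
  moreover have "s \<noteq> l"
    using assms l by (auto simp: inner_edges_def)
  ultimately obtain a where "(s, a) \<in> labels \<and> (\<exists>c\<in>children S s. (c, a) \<in> labels)"
    using branch_exists[OF leaf_in_labels] by blast
  then show ?thesis
    unfolding branch_time_def by (rule LeastI)
qed

lemma branch_time_unique:
  assumes su: "(s, u) \<in> labels" and c: "c \<in> children S s" "(c, u) \<in> labels"
  shows "u = branch_time s"
proof (rule antisym)
  have "s \<in> inner_edges"
    using inner_edges_if_child[OF c(1)] labels_bounds[OF su] by blast
  then obtain c' where c': "c' \<in> children S s" "(c', branch_time s) \<in> labels"
    using branch_time by blast
  then show "u \<le> branch_time s"
    using labels_mono[OF su c'(2)] child_strict_anc[OF c'(1)] by blast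
  show "branch_time s \<le> u"
    unfolding branch_time_def using su c by (intro Least_le) blast
qed

text \<open>At time branch_time s the shuffle must move in S, for a move in L would
  produce a label above the branching time.\<close>
lemma children_branch_time_in_labels:
  assumes s: "s \<in> inner_edges" and c: "c \<in> children S s"
  shows "(c, branch_time s) \<in> labels"
proof -
  obtain e where e: "e \<in> edges A" "lab e = (s, branch_time s)"
    using branch_time[OF s] by (auto simp: labels_def)
  have nl: "e \<notin> leaves A"
    using lab_leaf[of e] e s by (auto simp: inner_edges_def)
  from lab_children[OF e(1) nl] show ?thesis
  proof
    assume "bij_betw lab (children A e) (children S (fst (lab e)) \<times> {snd (lab e)})"
    then have "(c, branch_time s) \<in> lab ` children A e"
      using c e(2) by (simp add: bij_betw_def)
    then show ?thesis
      using children_A_subset by (auto simp: labels_def)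
  next
    assume b: "bij_betw lab (children A e) ({fst (lab e)} \<times> children (L n) (snd (lab e)))"
    obtain x where x: "x \<in> children A e"
      using nonleaf_has_child[OF e(1) nl] by blast
    have "lab x \<in> {s} \<times> children (L n) (branch_time s)"
      using b x e(2) bij_betwE by fastforce
    then have "(s, Suc (branch_time s)) \<in> labels"
      using x children_A_subset by (force simp: labels_def children_L split: if_splits)
    moreover obtain c' where c': "c' \<in> children S s" "(c', branch_time s) \<in> labels"
      using branch_time[OF s] by blast
    ultimately have "Suc (branch_time s) \<le> branch_time s"
      using labels_mono[OF _ c'(2)] child_strict_anc[OF c'(1)] by blast
    then show ?thesis
      by simp
  qed
qed

lemma labels_Suc:
  assumes su: "(s, u) \<in> labels" and "u < n" and "s \<in> inner_edges \<Longrightarrow> u \<noteq> branch_time s"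
  shows "(s, Suc u) \<in> labels"
proof -
  obtain e where e: "e \<in> edges A" "lab e = (s, u)"
    using su by (auto simp: labels_def)
  have nl: "e \<notin> leaves A"
    using lab_leaf[of e] e \<open>u < n\<close> by auto
  obtain x where x: "x \<in> children A e"
    using nonleaf_has_child[OF e(1) nl] by blast
  have x_in: "lab x \<in> labels"
    using x children_A_subset by (auto simp: labels_def)
  from lab_children[OF e(1) nl] show ?thesis
  proof
    assume "bij_betw lab (children A e) (children S (fst (lab e)) \<times> {snd (lab e)})"
    then have "lab x \<in> children S s \<times> {u}"
      using x e(2) bij_betwE by fastforce
    then have c: "fst (lab x) \<in> children S s" "lab x = (fst (lab x), u)"
      by (auto simp: prod_eq_iff)
    then have "u = branch_time s"
      using branch_time_unique[OF su c(1)] x_in by simp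
    moreover have "s \<in> inner_edges"
      using inner_edges_if_child[OF c(1)] labels_bounds[OF su] by blast
    ultimately show ?thesis
      using assms(3) by simp
  next
    assume "bij_betw lab (children A e) ({fst (lab e)} \<times> children (L n) (snd (lab e)))"
    then have "lab x \<in> {s} \<times> children (L n) u"
      using x e(2) bij_betwE by fastforce
    then show ?thesis
      using x_in by (auto simp: children_L split: if_splits)
  qed
qed

lemma shuffle_times_monotone: "shuffle_times \<in> monotone_times n"
  unfolding monotone_times_def
proof (intro CollectI allI conjI impI)
  fix s
  assume s: "s \<in> inner_edges"
  then show "shuffle_times s \<le> n"
    using branch_time labels_bounds by (auto simp: shuffle_times_def)
  assume "s \<noteq> root S"
  moreover have "s \<in> edges S"
    using s by (simp add: inner_edges_def)
  ultimately have p: "par S s \<in> inner_edges" "par S s \<noteq> s"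
    using par_inner_edges par_neq by blast+
  then have "branch_time (par S s) \<le> branch_time s"
    using labels_mono[OF conjunct1[OF branch_time[OF p(1)]] conjunct1[OF branch_time[OF s]]
      anc_par] by blast
  then show "shuffle_times (par S s) \<le> shuffle_times s"
    using s p by (simp add: shuffle_times_def)
next
  fix s
  assume "s \<notin> inner_edges"
  then show "shuffle_times s = 0"
    by (simp add: shuffle_times_def)
qed

lemma labels_subset_label_set: "labels \<subseteq> label_set n shuffle_times"
proof safe
  fix s t
  assume st: "(s, t) \<in> labels"
  have s: "s \<in> edges S"
    using labels_bounds[OF st] by blast
  have "t \<le> last_time n shuffle_times s"
  proof (cases "s \<in> inner_edges")
    case True
    obtain c where c: "c \<in> children S s" "(c, branch_time s) \<in> labels"
      using branch_time[OF True] by blast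
    then have "t \<le> branch_time s"
      using labels_mono[OF st c(2)] child_strict_anc[OF c(1)] by blast
    then show ?thesis
      using True by (simp add: last_time_def shuffle_times_def)
  qed (use labels_bounds[OF st] in \<open>simp add: last_time_def\<close>)
  moreover have "first_time shuffle_times s \<le> t"
  proof (cases "s = root S")
    case False
    then have p: "par S s \<in> inner_edges" "par S s \<noteq> s"
      using par_inner_edges[OF s] par_neq[OF s] by blast+
    then have "branch_time (par S s) \<le> t"
      using labels_mono[OF conjunct1[OF branch_time[OF p(1)]] st anc_par] by blast
    then show ?thesis
      using False p by (simp add: first_time_def shuffle_times_def)
  qed (simp add: first_time_def)
  ultimately show "(s, t) \<in> label_set n shuffle_times"
    using s by (simp add: label_set_def)
qed

lemma first_time_in_labels: "s \<in> edges S \<Longrightarrow> (s, first_time shuffle_times s) \<in> labels"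
  using root_in_labels children_branch_time_in_labels par_inner_edges
  by (auto simp: first_time_def shuffle_times_def)

lemma label_set_subset_labels: "label_set n shuffle_times \<subseteq> labels"
proof safe
  fix s t
  assume "(s, t) \<in> label_set n shuffle_times"
  then have s: "s \<in> edges S" and t: "first_time shuffle_times s \<le> t" "t \<le> last_time n shuffle_times s"
    by (auto simp: label_set_def)
  from t show "(s, t) \<in> labels"
  proof (induction t)
    case 0
    then show ?case
      using first_time_in_labels[OF s] by simp
  next
    case (Suc t)
    show ?case
    proof (cases "first_time shuffle_times s = Suc t")
      case True
      then show ?thesis
        using first_time_in_labels[OF s] by simp
    next
      case False
      then have "(s, t) \<in> labels"
        using Suc by simp
      moreover have "t < n"
        using Suc.prems(2) first_le_last_time[OF shuffle_times_monotone s] by simp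
      moreover have "s \<in> inner_edges \<Longrightarrow> t \<noteq> branch_time s"
        using Suc.prems(2) by (simp add: last_time_def shuffle_times_def)
      ultimately show ?thesis
        by (rule labels_Suc)
    qed
  qed
qed

lemma labels_eq_label_set: "labels = label_set n shuffle_times"
  using labels_subset_label_set label_set_subset_labels by (rule antisym)

end

context depth_tree
begin

definition label_par :: "(nat \<Rightarrow> nat) \<Rightarrow> nat \<times> nat \<Rightarrow> nat \<times> nat" where
  "label_par \<tau> x = (if first_time \<tau> (fst x) < snd x then (fst x, snd x - 1) else (par S (fst x), snd x))"

definition label_children :: "nat \<Rightarrow> (nat \<Rightarrow> nat) \<Rightarrow> nat \<times> nat \<Rightarrow> (nat \<times> nat) set" where
  "label_children n \<tau> x = (if snd x < last_time n \<tau> (fst x) then {(fst x, Suc (snd x))}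
     else if fst x \<in> inner_edges then children S (fst x) \<times> {snd x} else {})"

definition shuffle_of :: "nat \<Rightarrow> (nat \<Rightarrow> nat) \<Rightarrow> nat rtree" where
  "shuffle_of n \<tau> = (prod_encode ` label_set n \<tau>, prod_encode (root S, 0),
     \<lambda>m. prod_encode (label_par \<tau> (prod_decode m)))"

lemma root_in_label_set: "(root S, 0) \<in> label_set n \<tau>"
  using root_in_edges by (simp add: label_set_def first_time_def)

lemma label_par_in_label_set:
  assumes \<tau>: "\<tau> \<in> monotone_times n" and x: "(s, u) \<in> label_set n \<tau>" "(s, u) \<noteq> (root S, 0)"
  shows "label_par \<tau> (s, u) \<in> label_set n \<tau> \<and> d (fst (label_par \<tau> (s, u))) + snd (label_par \<tau> (s, u)) + 1 = d s + u"
proof (cases "first_time \<tau> s < u")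
  case True
  then show ?thesis
    using x by (auto simp: label_par_def label_set_def)
next
  case False
  have s: "s \<in> edges S" "first_time \<tau> s \<le> u"
    using x by (auto simp: label_set_def)
  then have u: "u = first_time \<tau> s"
    using False by simp
  then have r: "s \<noteq> root S"
    using x by (auto simp: first_time_def)
  have "par S s \<in> inner_edges" "par S s \<in> edges S"
    using par_inner_edges[OF s(1) r] par_in_edges[OF s(1)] by blast+
  then have "(par S s, u) \<in> label_set n \<tau>"
    using first_le_last_time[OF \<tau> \<open>par S s \<in> edges S\<close>] u r
    by (simp add: label_set_def last_time_def first_time_def)
  then show ?thesis
    using False depth_par[OF s(1) r] by (simp add: label_par_def)
qed

lemma funpow_label_par:
  assumes \<tau>: "\<tau> \<in> monotone_times n"
  shows "x \<in> label_set n \<tau> \<Longrightarrow> (label_par \<tau> ^^ (d (fst x) + snd x)) x = (root S, 0)"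
proof (induction "d (fst x) + snd x" arbitrary: x)
  case 0
  then show ?case
    using depth_eq_0D by (auto simp: label_set_def)
next
  case (Suc k)
  obtain s u where x: "x = (s, u)"
    by (cases x)
  have "(s, u) \<noteq> (root S, 0)"
    using Suc.hyps(2) depth_root x by auto
  then have "label_par \<tau> x \<in> label_set n \<tau>"
    and k: "d (fst (label_par \<tau> x)) + snd (label_par \<tau> x) = k"
    using label_par_in_label_set[OF \<tau>, of s u] Suc.hyps(2) Suc.prems x by auto
  then have "(label_par \<tau> ^^ Suc k) x = (root S, 0)"
    using Suc.hyps(1)[OF k[symmetric]] by (simp only: funpow_Suc_right comp_apply)
  then show ?case
    using Suc.hyps(2) by simp
qed

lemma label_par_eq_iff:
  assumes \<tau>: "\<tau> \<in> monotone_times n" and x: "(s, u) \<in> label_set n \<tau>" and y: "y \<in> label_set n \<tau>"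
  shows "y \<noteq> (root S, 0) \<and> label_par \<tau> y = (s, u) \<longleftrightarrow> y \<in> label_children n \<tau> (s, u)"
proof -
  obtain s' u' where y': "y = (s', u')"
    by (cases y)
  have s: "s \<in> edges S" "first_time \<tau> s \<le> u" "u \<le> last_time n \<tau> s"
    and s': "s' \<in> edges S" "first_time \<tau> s' \<le> u'" "u' \<le> last_time n \<tau> s'"
    using x y y' by (auto simp: label_set_def)
  show ?thesis
  proof (cases "first_time \<tau> s' < u'")
    case True
    then have lp: "label_par \<tau> y = (s', u' - 1)"
      using y' by (simp add: label_par_def)
    show ?thesis
    proof
      assume "y \<noteq> (root S, 0) \<and> label_par \<tau> y = (s, u)"
      then have "s' = s" "u' = Suc u"
        using lp True by auto
      then show "y \<in> label_children n \<tau> (s, u)"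
        using y' s' by (simp add: label_children_def)
    next
      assume "y \<in> label_children n \<tau> (s, u)"
      then have "y = (s, Suc u)"
        using True y' s(3) childrenD[of s' S s]
        by (auto simp: label_children_def first_time_def last_time_def split: if_splits)
      then show "y \<noteq> (root S, 0) \<and> label_par \<tau> y = (s, u)"
        using lp y' by simp
    qed
  next
    case False
    then have u': "u' = first_time \<tau> s'"
      using s' by simp
    show ?thesis
    proof
      assume "y \<noteq> (root S, 0) \<and> label_par \<tau> y = (s, u)"
      then have r: "s' \<noteq> root S" and p: "par S s' = s" "u' = u"
        using False u' y' by (auto simp: label_par_def first_time_def)
      then have "s \<in> inner_edges" "s' \<in> children S s" "u = \<tau> s"
        using par_inner_edges[OF s'(1) r] u' by (auto simp: first_time_def)
      then show "y \<in> label_children n \<tau> (s, u)"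
        using y' p by (auto simp: label_children_def last_time_def)
    next
      assume "y \<in> label_children n \<tau> (s, u)"
      moreover have "(s', u') \<noteq> (s, Suc u)"
        using False s(2) u' by (auto simp: first_time_def)
      ultimately have c: "s' \<in> children S s" "u' = u" "s \<in> inner_edges"
        using y' by (auto simp: label_children_def split: if_splits)
      then show "y \<noteq> (root S, 0) \<and> label_par \<tau> y = (s, u)"
        using childrenD[OF c(1)] False y' by (auto simp: label_par_def)
    qed
  qed
qed

lemma shuffle_of_simps:
  "edges (shuffle_of n \<tau>) = prod_encode ` label_set n \<tau>"
  "root (shuffle_of n \<tau>) = prod_encode (root S, 0)"
  "par (shuffle_of n \<tau>) m = prod_encode (label_par \<tau> (prod_decode m))"
  by (simp_all add: shuffle_of_def edges_def root_def par_def)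

lemma label_set_subset: "\<tau> \<in> monotone_times n \<Longrightarrow> label_set n \<tau> \<subseteq> edges S \<times> {0..n}"
  using first_le_last_time by (fastforce simp: label_set_def)

lemma is_tree_shuffle_of:
  assumes \<tau>: "\<tau> \<in> monotone_times n"
  shows "is_tree (shuffle_of n \<tau>)"
proof -
  have "(par (shuffle_of n \<tau>) ^^ k) (prod_encode x) = prod_encode ((label_par \<tau> ^^ k) x)" for k x
    by (induction k) (simp_all add: shuffle_of_simps)
  then show ?thesis
    using finite_subset[OF label_set_subset[OF \<tau>]] finite_edges root_in_label_set
      label_par_in_label_set[OF \<tau>] funpow_label_par[OF \<tau>]
    unfolding is_tree_def shuffle_of_simps by (fastforce simp: image_iff)
qed

lemma label_children_subset:
  assumes \<tau>: "\<tau> \<in> monotone_times n" and x: "(s, u) \<in> label_set n \<tau>"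
  shows "label_children n \<tau> (s, u) \<subseteq> label_set n \<tau>"
proof
  fix y
  assume y: "y \<in> label_children n \<tau> (s, u)"
  have s: "s \<in> edges S" "first_time \<tau> s \<le> u" "u \<le> last_time n \<tau> s"
    using x by (auto simp: label_set_def)
  show "y \<in> label_set n \<tau>"
  proof (cases "u < last_time n \<tau> s")
    case True
    then show ?thesis
      using y s by (simp add: label_children_def label_set_def)
  next
    case False
    then obtain c where c: "y = (c, u)" "c \<in> children S s" "s \<in> inner_edges" "u = \<tau> s"
      using y s by (auto simp: label_children_def last_time_def split: if_splits)
    have "c \<in> edges S" "c \<noteq> root S" "par S c = s"
      using childrenD[OF c(2)] by simp_all
    moreover have "\<tau> s \<le> last_time n \<tau> c"
      using monotone_timesD[OF \<tau>] c(3) \<open>par S c = s\<close> \<open>c \<noteq> root S\<close>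
      by (auto simp: last_time_def)
    ultimately show ?thesis
      using c by (simp add: label_set_def first_time_def)
  qed
qed

lemma children_shuffle_of:
  assumes "\<tau> \<in> monotone_times n" "x \<in> label_set n \<tau>"
  shows "children (shuffle_of n \<tau>) (prod_encode x) = prod_encode ` label_children n \<tau> x"
proof -
  have "children (shuffle_of n \<tau>) (prod_encode x)
      = prod_encode ` {y \<in> label_set n \<tau>. y \<noteq> (root S, 0) \<and> label_par \<tau> y = x}"
    unfolding children_def shuffle_of_simps by auto
  also have "{y \<in> label_set n \<tau>. y \<noteq> (root S, 0) \<and> label_par \<tau> y = x} = label_children n \<tau> x"
    using label_par_eq_iff[OF assms(1), of "fst x" "snd x"] assms(2)
      label_children_subset[OF assms(1), of "fst x" "snd x"]
    by auto
  finally show ?thesis .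
qed

lemma label_children_empty_iff:
  assumes "(s, u) \<in> label_set n \<tau>"
  shows "label_children n \<tau> (s, u) = {} \<longleftrightarrow> s \<in> leaves S \<and> u = n"
proof -
  have "s \<in> inner_edges \<Longrightarrow> children S s \<noteq> {}"
    by (auto simp: inner_edges_def leaves_def)
  then show ?thesis
    using assms by (auto simp: label_children_def label_set_def last_time_def inner_edges_def)
qed

lemma leaf_in_label_set: "\<tau> \<in> monotone_times n \<Longrightarrow> s \<in> leaves S \<Longrightarrow> (s, n) \<in> label_set n \<tau>"
  using first_le_last_time[of \<tau> n s]
  by (auto simp: label_set_def leaves_def last_time_def inner_edges_def)

lemma leaves_shuffle_of:
  assumes \<tau>: "\<tau> \<in> monotone_times n"
  shows "leaves (shuffle_of n \<tau>) = prod_encode ` (leaves S \<times> {n})"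
proof -
  have "leaves (shuffle_of n \<tau>) = prod_encode ` {x \<in> label_set n \<tau>. label_children n \<tau> x = {}}"
    unfolding leaves_def using children_shuffle_of[OF \<tau>] by (auto simp: shuffle_of_simps)
  also have "{x \<in> label_set n \<tau>. label_children n \<tau> x = {}} = leaves S \<times> {n}"
    using label_children_empty_iff leaf_in_label_set[OF \<tau>] by fastforce
  finally show ?thesis .
qed

lemma shuffle_of_is_shuffle:
  assumes \<tau>: "\<tau> \<in> monotone_times n"
  shows "is_shuffle S (L n) (shuffle_of n \<tau>) prod_decode"
  unfolding is_shuffle_def
proof (intro conjI ballI)
  show "is_tree (shuffle_of n \<tau>)"
    using \<tau> by (rule is_tree_shuffle_of)
  show "prod_decode e \<in> edges S \<times> edges (L n)" if "e \<in> edges (shuffle_of n \<tau>)" for e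
    using that label_set_subset[OF \<tau>] by (auto simp: edges_L shuffle_of_simps)
  show "prod_decode (root (shuffle_of n \<tau>)) = (root S, root (L n))"
    by (simp add: root_L shuffle_of_simps)
  show "bij_betw prod_decode (leaves (shuffle_of n \<tau>)) (leaves S \<times> leaves (L n))"
    using bij_betw_prod_decode by (simp add: leaves_shuffle_of[OF \<tau>] leaves_L)
next
  fix e
  assume e: "e \<in> edges (shuffle_of n \<tau>) - leaves (shuffle_of n \<tau>)"
  then obtain s u where x: "e = prod_encode (s, u)" "(s, u) \<in> label_set n \<tau>"
    by (auto simp: shuffle_of_simps)
  have ch: "children (shuffle_of n \<tau>) e = prod_encode ` label_children n \<tau> (s, u)"
    using children_shuffle_of[OF \<tau> x(2)] x(1) by simp
  have "label_children n \<tau> (s, u) = {s} \<times> children (L n) u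
      \<or> label_children n \<tau> (s, u) = children S s \<times> {u}"
    using e ch first_le_last_time[OF \<tau>, of s] x(2)
    by (auto simp: label_children_def children_L leaves_def label_set_def split: if_splits)
  then show "bij_betw prod_decode (children (shuffle_of n \<tau>) e)
        (children S (fst (prod_decode e)) \<times> {snd (prod_decode e)})
      \<or> bij_betw prod_decode (children (shuffle_of n \<tau>) e)
        ({fst (prod_decode e)} \<times> children (L n) (snd (prod_decode e)))"
    using ch x(1) bij_betw_prod_decode by auto
qed

lemma labels_shuffle_of: "prod_decode ` edges (shuffle_of n \<tau>) = label_set n \<tau>"
  by (simp add: shuffle_of_simps image_image)

lemma inj_on_label_set: "inj_on (label_set n) (monotone_times n)"
proof (rule inj_onI, rule ext)
  fix \<tau> \<tau>' s
  assume \<tau>: "\<tau> \<in> monotone_times n" "\<tau>' \<in> monotone_times n" and eq: "label_set n \<tau> = label_set n \<tau>'"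
  have "\<sigma> s \<le> \<sigma>' s"
    if "\<sigma> \<in> monotone_times n" "\<sigma>' \<in> monotone_times n" "label_set n \<sigma> = label_set n \<sigma>'"
      "s \<in> inner_edges" for \<sigma> \<sigma>'
  proof -
    have "s \<in> edges S"
      using \<open>s \<in> inner_edges\<close> by (simp add: inner_edges_def)
    then have "(s, \<sigma> s) \<in> label_set n \<sigma>"
      using first_le_last_time[OF that(1) \<open>s \<in> edges S\<close>] that(4)
      by (simp add: label_set_def last_time_def)
    then have "(s, \<sigma> s) \<in> label_set n \<sigma>'"
      using that(3) by simp
    then show ?thesis
      using that(4) by (simp add: label_set_def last_time_def)
  qed
  then show "\<tau> s = \<tau>' s"
    using \<tau> eq by (cases "s \<in> inner_edges") (auto intro: antisym simp: monotone_times_def)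
qed

lemma lab_iso_if_same_labels:
  assumes A: "is_shuffle S (L n) A lab" and B: "is_shuffle S (L n) B lab'"
    and eq: "lab ` edges A = lab' ` edges B"
  shows "lab_iso (A, lab) (B, lab')"
proof -
  interpret A: line_shuffle S d n A lab
    using A by unfold_locales
  interpret B: line_shuffle S d n B lab'
    using B by unfold_locales
  define f where "f = the_inv_into (edges B) lab' \<circ> lab"
  have f_lab: "lab' (f e) = lab e" if "e \<in> edges A" for e
  proof -
    have "lab e \<in> lab' ` edges B"
      using that eq by blast
    then show ?thesis
      unfolding f_def by (simp add: f_the_inv_into_f[OF B.inj_on_lab])
  qed
  have inv_lab: "the_inv_into (edges B) lab' (lab' e) = e" if "e \<in> edges B" for e
    using the_inv_into_f_f[OF B.inj_on_lab that] .
  have "bij_betw lab (edges A) (lab' ` edges B)"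
    using inj_on_imp_bij_betw[OF A.inj_on_lab] eq by simp
  then have bij: "bij_betw f (edges A) (edges B)"
    unfolding f_def
    using bij_betw_trans bij_betw_the_inv_into[OF inj_on_imp_bij_betw[OF B.inj_on_lab]] by blast
  have "f (root A) = root B"
    using A.lab_root B.lab_root inv_lab[OF B.root_A] by (simp add: f_def)
  moreover have "f (par A e) = par B (f e)" if e: "e \<in> edges A" "e \<noteq> root A" for e
  proof -
    obtain s t where st: "lab e = (s, t)"
      by (cases "lab e")
    have fe: "f e \<in> edges B"
      using bij e by (auto simp: bij_betw_def)
    have "f e \<noteq> root B"
    proof
      assume "f e = root B"
      then have "lab e = lab (root A)"
        using f_lab[OF e(1)] B.lab_root A.lab_root by simp
      then show False
        using inj_onD[OF A.inj_on_lab _ e(1) A.root_A] e(2) by blast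
    qed
    then have "lab' (par B (f e)) = lab (par A e)"
      using B.lab_par[OF fe _ f_lab[OF e(1), unfolded st]] A.lab_par[OF e st] eq
      by (simp add: A.labels_def B.labels_def)
    then show ?thesis
      using inv_lab[OF B.par_A[OF fe \<open>f e \<noteq> root B\<close>]] by (simp add: f_def)
  qed
  ultimately show ?thesis
    unfolding lab_iso_def using bij f_lab by auto
qed

lemma lab_iso_iff_same_labels:
  assumes "is_shuffle S (L n) A lab" "is_shuffle S (L n) B lab'"
  shows "lab_iso (A, lab) (B, lab') \<longleftrightarrow> lab ` edges A = lab' ` edges B"
proof
  assume "lab_iso (A, lab) (B, lab')"
  then obtain f where "bij_betw f (edges A) (edges B)" "\<forall>e\<in>edges A. lab' (f e) = lab e"
    by (auto simp: lab_iso_def)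
  then show "lab ` edges A = lab' ` edges B"
    by (metis (no_types, lifting) bij_betw_imp_surj_on image_cong image_image)
qed (rule lab_iso_if_same_labels[OF assms])

theorem sh_eq_card_monotone_times: "sh S (L n) = card (monotone_times n)"
proof -
  let ?labels = "\<lambda>X :: nat rtree \<times> (nat \<Rightarrow> nat \<times> nat). snd X ` edges (fst X)"
  have "sh S (L n) = card (?labels ` shuffles S (L n))"
    unfolding sh_def
  proof (rule card_quotient_eq_card_image)
    fix X Y
    assume "X \<in> shuffles S (L n)" "Y \<in> shuffles S (L n)"
    then show "lab_iso X Y \<longleftrightarrow> ?labels X = ?labels Y"
      using lab_iso_iff_same_labels by (cases X, cases Y) (simp add: shuffles_def)
  qed
  also have "?labels ` shuffles S (L n) = label_set n ` monotone_times n"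
  proof safe
    fix A lab
    assume "(A, lab) \<in> shuffles S (L n)"
    then interpret line_shuffle S d n A lab
      by unfold_locales (simp add: shuffles_def)
    show "?labels (A, lab) \<in> label_set n ` monotone_times n"
      using labels_eq_label_set shuffle_times_monotone by (simp add: labels_def)
  next
    fix \<tau>
    assume "\<tau> \<in> monotone_times n"
    then have "(shuffle_of n \<tau>, prod_decode) \<in> shuffles S (L n)"
      using shuffle_of_is_shuffle by (simp add: shuffles_def)
    then show "label_set n \<tau> \<in> ?labels ` shuffles S (L n)"
      using labels_shuffle_of by force
  qed
  also have "card (label_set n ` monotone_times n) = card (monotone_times n)"
    by (rule card_image[OF inj_on_label_set])
  finally show ?thesis .
qed

end

lemma card_functions_vanishing_above_4:
  "card {\<tau> :: nat \<Rightarrow> nat. P (\<tau> 0) (\<tau> 1) (\<tau> 2) (\<tau> 3) (\<tau> 4) \<and> (\<forall>s>4. \<tau> s = 0)}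
     = card {(a, b, c, e, f). P a b c e f}"
proof (rule bij_betw_same_card)
  define g :: "nat \<times> nat \<times> nat \<times> nat \<times> nat \<Rightarrow> nat \<Rightarrow> nat" where
    "g x = (\<lambda>_. 0)(0 := fst x, 1 := fst (snd x), 2 := fst (snd (snd x)),
       3 := fst (snd (snd (snd x))), 4 := snd (snd (snd (snd x))))" for x
  have "\<tau> = g (\<tau> 0, \<tau> 1, \<tau> 2, \<tau> 3, \<tau> 4)" if "\<forall>s>4. \<tau> s = 0" for \<tau> :: "nat \<Rightarrow> nat"
  proof
    fix s :: nat
    have "s = 0 \<or> s = 1 \<or> s = 2 \<or> s = 3 \<or> s = 4 \<or> s > 4"
      by arith
    then show "\<tau> s = g (\<tau> 0, \<tau> 1, \<tau> 2, \<tau> 3, \<tau> 4) s"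
      using that by (auto simp: g_def)
  qed
  moreover have "g x s = 0" if "s > 4" for x s
    using that by (simp add: g_def)
  ultimately show "bij_betw (\<lambda>\<tau> :: nat \<Rightarrow> nat. (\<tau> 0, \<tau> 1, \<tau> 2, \<tau> 3, \<tau> 4))
      {\<tau>. P (\<tau> 0) (\<tau> 1) (\<tau> 2) (\<tau> 3) (\<tau> 4) \<and> (\<forall>s>4. \<tau> s = 0)} {(a, b, c, e, f). P a b c e f}"
    by (intro bij_betw_byWitness[where f' = g]) (auto simp: g_def)
qed

lemma S_tree_simps:
  "edges S_tree = {0..7}" "root S_tree = 0"
  "par S_tree = (\<lambda>e. if e = 1 then 0 else if e \<in> {2,3,4} then 1
     else if e = 5 then 2 else if e = 6 then 3 else if e = 7 then 4 else 0)"
  by (simp_all add: S_tree_def edges_def root_def par_def)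

lemma R_tree_simps:
  "edges R_tree = {0..6}" "root R_tree = 0"
  "par R_tree = (\<lambda>e. if e \<in> {1,2} then 0 else if e = 3 then 1
     else if e = 4 then 2 else if e = 5 then 3 else if e = 6 then 4 else 0)"
  by (simp_all add: R_tree_def edges_def root_def par_def)

lemma atLeastAtMost_0_7: "(s::nat) \<in> {0..7} \<longleftrightarrow> s = 0 \<or> s = 1 \<or> s = 2 \<or> s = 3 \<or> s = 4 \<or> s = 5 \<or> s = 6 \<or> s = 7"
  and atLeastAtMost_0_6: "(s::nat) \<in> {0..6} \<longleftrightarrow> s = 0 \<or> s = 1 \<or> s = 2 \<or> s = 3 \<or> s = 4 \<or> s = 5 \<or> s = 6"
  by auto

lemma children_S_tree:
  "children S_tree s = (if s = 0 then {1} else if s = 1 then {2, 3, 4} else if s = 2 then {5}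
     else if s = 3 then {6} else if s = 4 then {7} else {})"
  unfolding children_def S_tree_simps atLeastAtMost_0_7 by auto

lemma children_R_tree:
  "children R_tree s = (if s = 0 then {1, 2} else if s = 1 then {3} else if s = 2 then {4}
     else if s = 3 then {5} else if s = 4 then {6} else {})"
  unfolding children_def R_tree_simps atLeastAtMost_0_6 by auto

lemma leaves_S_tree: "leaves S_tree = {5, 6, 7}"
  unfolding leaves_def children_S_tree S_tree_simps by auto

lemma leaves_R_tree: "leaves R_tree = {5, 6}"
  unfolding leaves_def children_R_tree R_tree_simps by auto

lemma depth_tree_S:
  "depth_tree S_tree (\<lambda>s. if s = 0 then 0 else if s = 1 then 1 else if s \<le> 4 then 2 else 3)"
proof
  fix s
  assume "s \<in> edges S_tree" "s \<notin> leaves S_tree"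
  then have "s \<in> {0, 1, 2, 3, 4}"
    unfolding leaves_S_tree S_tree_simps atLeastAtMost_0_7 by auto
  moreover have "anc S_tree 0 5"
    unfolding anc_def S_tree_simps by (rule exI[of _ 3]) (simp add: numeral_eq_Suc)
  moreover have "anc S_tree 1 5"
    unfolding anc_def S_tree_simps by (rule exI[of _ 2]) (simp add: numeral_eq_Suc)
  moreover have "anc S_tree 2 5" "anc S_tree 3 6" "anc S_tree 4 7"
    unfolding anc_def S_tree_simps by (rule exI[of _ 1], simp)+
  ultimately show "\<exists>l\<in>leaves S_tree. anc S_tree s l"
    unfolding leaves_S_tree by auto
qed (unfold S_tree_simps atLeastAtMost_0_7, auto)

lemma depth_tree_R:
  "depth_tree R_tree (\<lambda>s. if s = 0 then 0 else if s \<le> 2 then 1 else if s \<le> 4 then 2 else 3)"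
proof
  fix s
  assume "s \<in> edges R_tree" "s \<notin> leaves R_tree"
  then have "s \<in> {0, 1, 2, 3, 4}"
    unfolding leaves_R_tree R_tree_simps atLeastAtMost_0_6 by auto
  moreover have "anc R_tree 0 5"
    unfolding anc_def R_tree_simps by (rule exI[of _ 3]) (simp add: numeral_eq_Suc)
  moreover have "anc R_tree 1 5" "anc R_tree 2 6"
    unfolding anc_def R_tree_simps by (rule exI[of _ 2], simp add: numeral_eq_Suc)+
  moreover have "anc R_tree 3 5" "anc R_tree 4 6"
    unfolding anc_def R_tree_simps by (rule exI[of _ 1], simp)+
  ultimately show "\<exists>l\<in>leaves R_tree. anc R_tree s l"
    unfolding leaves_R_tree by auto
qed (unfold R_tree_simps atLeastAtMost_0_6, auto)

lemma not_in_0_to_4_iff: "(s::nat) \<notin> {0, 1, 2, 3, 4} \<longleftrightarrow> 4 < s"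
  by auto

lemma card_S_tree_times_tuples:
  "card {(a, b, c, e, f). a \<le> b \<and> b \<le> c \<and> b \<le> e \<and> b \<le> f \<and> c \<le> n \<and> e \<le> n \<and> f \<le> (n::nat)}
     = (\<Sum>k=0..n. ((k + 2) choose 2)\<^sup>2)"
proof -
  have "{(a, b, c, e, f). a \<le> b \<and> b \<le> c \<and> b \<le> e \<and> b \<le> f \<and> c \<le> n \<and> e \<le> n \<and> f \<le> n}
      = (SIGMA a:{0..n}. SIGMA b:{a..n}. {b..n} \<times> {b..n} \<times> {b..n})"
    by auto
  then have "card {(a, b, c, e, f). a \<le> b \<and> b \<le> c \<and> b \<le> e \<and> b \<le> f \<and> c \<le> n \<and> e \<le> n \<and> f \<le> n}
      = (\<Sum>a=0..n. \<Sum>b=a..n. (Suc n - b) ^ 3)"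
    by (simp add: power3_eq_cube mult.assoc)
  then show ?thesis
    unfolding sum_triangle_Suc_cubes .
qed

lemma card_R_tree_times_tuples:
  "card {(a, b, c, e, f). a \<le> b \<and> a \<le> c \<and> b \<le> e \<and> c \<le> f \<and> e \<le> n \<and> f \<le> (n::nat)}
     = (\<Sum>k=0..n. ((k + 2) choose 2)\<^sup>2)"
proof -
  have "{(a, b, c, e, f). a \<le> b \<and> a \<le> c \<and> b \<le> e \<and> c \<le> f \<and> e \<le> n \<and> f \<le> n}
      = (SIGMA a:{0..n}. SIGMA b:{a..n}. SIGMA c:{a..n}. {b..n} \<times> {c..n})"
    by auto
  then have "card {(a, b, c, e, f). a \<le> b \<and> a \<le> c \<and> b \<le> e \<and> c \<le> f \<and> e \<le> n \<and> f \<le> n}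
      = (\<Sum>a=0..n. (\<Sum>b=a..n. Suc n - b)\<^sup>2)"
    by (simp add: power2_eq_square sum_product)
  then show ?thesis
    unfolding sum_triangle_Suc_squares .
qed

lemma card_monotone_times_S_tree:
  "card (depth_tree.monotone_times S_tree n) = (\<Sum>k=0..n. ((k + 2) choose 2)\<^sup>2)"
proof -
  interpret depth_tree S_tree "\<lambda>s. if s = 0 then 0 else if s = 1 then 1 else if s \<le> 4 then 2 else 3"
    by (rule depth_tree_S)
  have inner: "inner_edges = {0, 1, 2, 3, 4}"
    unfolding inner_edges_def leaves_S_tree S_tree_simps by auto
  have ball: "(\<forall>s\<in>{0, 1, 2, 3, 4}. \<tau> s \<le> n \<and> (s \<noteq> root S_tree \<longrightarrow> \<tau> (par S_tree s) \<le> \<tau> s))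
      \<longleftrightarrow> \<tau> 0 \<le> \<tau> 1 \<and> \<tau> 1 \<le> \<tau> 2 \<and> \<tau> 1 \<le> \<tau> 3 \<and> \<tau> 1 \<le> \<tau> 4 \<and> \<tau> 2 \<le> n \<and> \<tau> 3 \<le> n \<and> \<tau> 4 \<le> n"
    for \<tau>
    by (simp add: S_tree_simps) linarith
  have "monotone_times n = {\<tau>. \<tau> 0 \<le> \<tau> 1 \<and> \<tau> 1 \<le> \<tau> 2 \<and> \<tau> 1 \<le> \<tau> 3 \<and> \<tau> 1 \<le> \<tau> 4
      \<and> \<tau> 2 \<le> n \<and> \<tau> 3 \<le> n \<and> \<tau> 4 \<le> n \<and> (\<forall>s>4. \<tau> s = 0)}"
    by (rule set_eqI) (simp only: mem_Collect_eq monotone_times_iff inner ball not_in_0_to_4_iff conj_assoc)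
  then show ?thesis
    using card_functions_vanishing_above_4[of "\<lambda>a b c e f. a \<le> b \<and> b \<le> c \<and> b \<le> e \<and> b \<le> f
      \<and> c \<le> n \<and> e \<le> n \<and> f \<le> n"] card_S_tree_times_tuples
    by (simp only: conj_assoc)
qed

lemma card_monotone_times_R_tree:
  "card (depth_tree.monotone_times R_tree n) = (\<Sum>k=0..n. ((k + 2) choose 2)\<^sup>2)"
proof -
  interpret depth_tree R_tree "\<lambda>s. if s = 0 then 0 else if s \<le> 2 then 1 else if s \<le> 4 then 2 else 3"
    by (rule depth_tree_R)
  have inner: "inner_edges = {0, 1, 2, 3, 4}"
    unfolding inner_edges_def leaves_R_tree R_tree_simps by auto
  have ball: "(\<forall>s\<in>{0, 1, 2, 3, 4}. \<tau> s \<le> n \<and> (s \<noteq> root R_tree \<longrightarrow> \<tau> (par R_tree s) \<le> \<tau> s))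
      \<longleftrightarrow> \<tau> 0 \<le> \<tau> 1 \<and> \<tau> 0 \<le> \<tau> 2 \<and> \<tau> 1 \<le> \<tau> 3 \<and> \<tau> 2 \<le> \<tau> 4 \<and> \<tau> 3 \<le> n \<and> \<tau> 4 \<le> n"
    for \<tau>
    by (simp add: R_tree_simps) linarith
  have "monotone_times n = {\<tau>. \<tau> 0 \<le> \<tau> 1 \<and> \<tau> 0 \<le> \<tau> 2 \<and> \<tau> 1 \<le> \<tau> 3 \<and> \<tau> 2 \<le> \<tau> 4
      \<and> \<tau> 3 \<le> n \<and> \<tau> 4 \<le> n \<and> (\<forall>s>4. \<tau> s = 0)}"
    by (rule set_eqI) (simp only: mem_Collect_eq monotone_times_iff inner ball not_in_0_to_4_iff conj_assoc)
  then show ?thesis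
    using card_functions_vanishing_above_4[of "\<lambda>a b c e f. a \<le> b \<and> a \<le> c \<and> b \<le> e \<and> c \<le> f
      \<and> e \<le> n \<and> f \<le> n"] card_R_tree_times_tuples
    by (simp only: conj_assoc)
qed

theorem mainTheorem7:
  shows "(\<forall>n::nat. sh S_tree (L n) = (\<Sum>k=0..n. ((k + 2) choose 2)^2)
                 \<and> sh R_tree (L n) = (\<Sum>k=0..n. ((k + 2) choose 2)^2))
         \<and> \<not> tree_iso S_tree R_tree"
proof (intro conjI allI)
  fix n :: nat
  show "sh S_tree (L n) = (\<Sum>k=0..n. ((k + 2) choose 2)^2)"
    using depth_tree.sh_eq_card_monotone_times[OF depth_tree_S] card_monotone_times_S_tree by simp
  show "sh R_tree (L n) = (\<Sum>k=0..n. ((k + 2) choose 2)^2)"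
    using depth_tree.sh_eq_card_monotone_times[OF depth_tree_R] card_monotone_times_R_tree by simp
next
  show "\<not> tree_iso S_tree R_tree"
  proof
    assume "tree_iso S_tree R_tree"
    then have "card (edges S_tree) = card (edges R_tree)"
      unfolding tree_iso_def using bij_betw_same_card by blast
    then show False
      by (simp add: S_tree_simps R_tree_simps)
  qed
qed

end
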